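(* With $A(\delta,\epsilon)$ the lobe area and $\nu=(1-\sqrt\delta)/(1+\sqrt\delta)$, the first-order coefficient $\lim_{\epsilon\to0}A(\delta,\epsilon)/\epsilon=\Gamma(\nu)$ satisfies $$\Gamma\!\left(\frac{1-\sqrt\delta}{1+\sqrt\delta}\right)\sim\frac{4\pi^2}{\delta}\exp\!\left(\frac{-\pi^2}{2\sqrt\delta}\right)\quad\text{as }\delta\to0^+,$$ so that $A(\delta,\epsilon)=\epsilon\,\Gamma(\nu)+O(\epsilon^2)$ with $\Gamma(\nu)$ exponentially small in $\delta^{-1/2}$.
   Context: $\Gamma(\nu)=1+8\sum_{k=1}^{\infty}\frac{(-1)^k k\,\nu^k}{1+\nu^k}$. $A(\delta,\epsilon)$ denotes the area of the lobe bounded by the stable and unstable manifolds of $z_a=(-\tfrac12,0)$, $z_b=(\tfrac12,0)$ for the twist map generated by $\tfrac12(\theta'-\theta)^2+V_\delta(\theta)+\epsilon\cos^2(\pi\theta)$, $V_\delta(\theta)=-\frac{2}{\pi}\int_0^\theta\arctan\!\left(\frac{\delta\sin(2\pi t)}{1+\delta\cos(2\pi t)}\right)dt$, and it satisfies $A=\epsilon\Gamma(\nu)+O(\epsilon^2)$ as $\epsilon\to0$. *)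

theory Defs
  imports "HOL-Analysis.Analysis" "HOL-Library.Landau_Symbols"
begin

definition Gamma_lobe :: "real \<Rightarrow> real" where
  "Gamma_lobe \<nu> = 1 + 8 * (\<Sum>n. (let k = Suc n in (-1) ^ k * real k * \<nu> ^ k / (1 + \<nu> ^ k)))"

end

theory Submission
  imports Defs "HOL-Complex_Analysis.Complex_Analysis" "HOL-Real_Asymp.Real_Asymp"
begin

(* Put nu = exp (-a) and phi t = e^t / (e^t + 1)^2.  Expanding k nu^k / (1 + nu^k) as a geometric
   series and summing the resulting absolutely convergent double series by columns gives
   Gamma (exp (-a)) = 4 * sum_{m in Z} (-1)^m phi (a m).  This alternating sum is evaluated with the
   residue theorem for pi phi (a w) / sin (pi w) on the rectangles |Re w| <= N + 1/2,
   |Im w| <= 2 pi / a: besides the integers, the only poles inside are the double poles of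
   phi (a w) at +-i pi / a, each with residue -pi^2 cosh (pi^2/a) / (a^2 sinh (pi^2/a)^2).  After
   division by 2 pi i the two horizontal sides contribute at most 1 / (a sinh (2 pi^2 / a)), and
   the vertical ones vanish as N -> oo.  Hence Gamma (exp (-a)) ~ 16 pi^2 / a^2 * exp (-pi^2/a)
   as a -> 0+, and a = ln ((1 + sqrt delta) / (1 - sqrt delta)) = 2 sqrt delta + O(delta^(3/2))
   turns this into the claim. *)

lemma exp_eq_minus_one_iff:
  fixes z :: complex
  shows "exp z = -1 \<longleftrightarrow> (\<exists>n::int. z = \<i> * of_real ((2 * n + 1) * pi))"
proof -
  have "exp z = -1 \<longleftrightarrow> exp (z - \<i> * of_real pi) = 1"
    by (auto simp: exp_diff equation_minus_iff)
  also have "\<dots> \<longleftrightarrow> (\<exists>n::int. Re z = 0 \<and> Im z = (2 * n + 1) * pi)"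
    unfolding exp_eq_1 by (auto simp: algebra_simps)
  also have "\<dots> \<longleftrightarrow> (\<exists>n::int. z = \<i> * of_real ((2 * n + 1) * pi))"
    by (auto simp: complex_eq_iff)
  finally show ?thesis .
qed

lemma exp_eq_minus_one_unique:
  fixes v w :: complex
  assumes "exp v = -1" "exp w = -1" "\<bar>Im v - Im w\<bar> < 2 * pi"
  shows "v = w"
proof -
  obtain m n :: int where mn: "v = \<i> * of_real ((2 * m + 1) * pi)" "w = \<i> * of_real ((2 * n + 1) * pi)"
    using assms(1,2) by (auto simp: exp_eq_minus_one_iff)
  then have "Im v - Im w = 2 * pi * real_of_int (m - n)"
    by (simp add: algebra_simps)
  then have "2 * pi * \<bar>real_of_int (m - n)\<bar> < 2 * pi * 1"
    using assms(3) by (simp add: abs_mult)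
  then have "\<bar>m - n\<bar> < 1"
    by (metis mult_less_cancel_left_pos of_int_abs of_int_less_1_iff pi_gt_zero zero_less_mult_iff zero_less_numeral)
  then have "m = n" by simp
  then show ?thesis using mn by simp
qed

lemma exp_times_plus_one_eq_0_iff:
  fixes w :: complex
  assumes "a \<noteq> 0"
  shows "exp (of_real a * w) + 1 = 0 \<longleftrightarrow> (\<exists>n::int. w = \<i> * of_real ((2 * n + 1) * pi / a))"
proof -
  have "exp (of_real a * w) + 1 = 0 \<longleftrightarrow> exp (of_real a * w) = -1"
    by (simp add: eq_neg_iff_add_eq_0)
  also have "\<dots> \<longleftrightarrow> (\<exists>n::int. of_real a * w = \<i> * of_real ((2 * n + 1) * pi))"
    by (rule exp_eq_minus_one_iff)
  also have "\<dots> \<longleftrightarrow> (\<exists>n::int. w = \<i> * of_real ((2 * n + 1) * pi / a))"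
    using assms by (simp add: field_simps)
  finally show ?thesis .
qed

lemma sin_pi_times_eq_0_iff:
  fixes w :: complex
  shows "sin (of_real pi * w) = 0 \<longleftrightarrow> w \<in> \<int>"
  by (auto simp: sin_eq_0 Ints_def field_simps)

lemma cos_i_times_of_real: "cos (\<i> * of_real x) = of_real (cosh x)"
  by (simp add: cosh_real[symmetric] cosh_def exp_minus)

lemma sin_i_times_of_real: "sin (\<i> * of_real x) = \<i> * of_real (sinh x)"
  using sinh_real[of x] by (simp add: sinh_def exp_minus)

lemma norm_sin_squared_Re_Im: "norm (sin z) ^ 2 = sin (Re z) ^ 2 + sinh (Im z) ^ 2"
  unfolding norm_sin_squared cos_double_sin
  by (simp add: sinh_def power2_eq_square exp_minus field_simps
      flip: exp_add)

lemma abs_sinh_Im_le_norm_sin: "\<bar>sinh (Im z)\<bar> \<le> norm (sin z)"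
  by (rule abs_le_square_iff[THEN iffD2, of _ "norm (sin z)", simplified])
    (simp add: norm_sin_squared_Re_Im)

lemma abs_sin_Re_le_norm_sin: "\<bar>sin (Re z)\<bar> \<le> norm (sin z)"
  by (rule abs_le_square_iff[THEN iffD2, of _ "norm (sin z)", simplified])
    (simp add: norm_sin_squared_Re_Im)

lemma abs_sin_pi_half_odd:
  fixes x :: real and N :: nat
  assumes "\<bar>x\<bar> = real N + 1/2"
  shows "\<bar>sin (pi * x)\<bar> = 1"
proof -
  have "\<bar>sin (pi * (real N + 1/2))\<bar> = 1"
    by (simp add: distrib_left sin_add cos_npi mult.commute)
  moreover have "\<bar>sin (pi * x)\<bar> = \<bar>sin (pi * \<bar>x\<bar>)\<bar>"
    by (cases "x \<ge> 0") auto
  ultimately show ?thesis using assms by simp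
qed

lemma exp_div_exp_minus_one_squared_abs:
  fixes t :: real
  shows "exp t / (exp t - 1)^2 = exp \<bar>t\<bar> / (exp \<bar>t\<bar> - 1)^2"
proof (cases "t \<ge> 0")
  case False
  define e where "e = exp t"
  have "e / (e - 1)^2 = inverse e / (inverse e - 1)^2"
    by (simp add: e_def divide_simps power2_eq_square) (simp add: algebra_simps)
  then show ?thesis
    using False by (simp add: e_def exp_minus)
qed simp

lemma sum_atLeastAtMost_int_symmetric:
  fixes g :: "int \<Rightarrow> 'a::semiring_1"
  assumes "\<And>m. g (- m) = g m"
  shows "(\<Sum>m = -int N..int N. g m) = g 0 + 2 * (\<Sum>k<N. g (int k + 1))"
proof (induction N)
  case (Suc N)
  have "{-int (Suc N)..int (Suc N)} = insert (int N + 1) (insert (- (int N + 1)) {-int N..int N})"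
    by auto
  then have "(\<Sum>m = -int (Suc N)..int (Suc N). g m)
             = g (int N + 1) + g (- (int N + 1)) + (\<Sum>m = -int N..int N. g m)"
    by (simp add: add.assoc)
  then show ?case
    using Suc assms[of "int N + 1"] by (simp add: algebra_simps mult_2)
qed simp

lemma suminf_swap_norm_summable:
  fixes F :: "nat \<Rightarrow> nat \<Rightarrow> 'a::banach"
  assumes rows: "\<And>n. summable (\<lambda>j. norm (F n j))"
    and total: "summable (\<lambda>n. \<Sum>j. norm (F n j))"
  shows "(\<Sum>n. \<Sum>j. F n j) = (\<Sum>j. \<Sum>n. F n j)"
proof -
  have "((\<lambda>j. norm (F n j)) has_sum (\<Sum>j. norm (F n j))) UNIV" for n
    using rows[of n] by (intro norm_summable_imp_has_sum) (simp_all add: summable_sums)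
  moreover have "(\<lambda>n. \<Sum>j. norm (F n j)) summable_on UNIV"
    using total by (intro norm_summable_imp_summable_on) (simp add: suminf_nonneg rows)
  ultimately have "(\<lambda>p. norm (F (fst p) (snd p))) summable_on UNIV \<times> UNIV"
    by (intro summable_on_SigmaI) auto
  then have "(\<lambda>p. F (fst p) (snd p)) summable_on UNIV \<times> UNIV"
    by (rule abs_summable_summable)
  then obtain S where S: "((\<lambda>(n, j). F n j) has_sum S) (UNIV \<times> UNIV)"
    by (auto simp: summable_on_def case_prod_unfold)
  have iterated: "(\<Sum>x. \<Sum>y. G x y) = S"
    if G: "((\<lambda>(x, y). G x y) has_sum S) (UNIV \<times> UNIV)" "\<And>x. summable (\<lambda>y. norm (G x y))"
    for G :: "nat \<Rightarrow> nat \<Rightarrow> 'a"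
  proof -
    have "((\<lambda>y. G x y) has_sum (\<Sum>y. G x y)) UNIV" for x
      using G(2)[of x] summable_norm_cancel[OF G(2)[of x]]
      by (intro norm_summable_imp_has_sum) (simp_all add: summable_sums)
    then have "((\<lambda>x. \<Sum>y. G x y) has_sum S) UNIV"
      by (intro has_sum_SigmaD[OF G(1)]) auto
    then show ?thesis
      by (simp add: has_sum_imp_sums sums_unique[symmetric])
  qed
  have cols: "summable (\<lambda>n. norm (F n j))" for j
  proof (rule summable_comparison_test[OF _ total])
    have "norm (F n j) \<le> (\<Sum>j. norm (F n j))" for n
      using sum_le_suminf[OF rows[of n], of "{j}"] by simp
    then show "\<exists>N. \<forall>n\<ge>N. norm (norm (F n j)) \<le> (\<Sum>j. norm (F n j))"
      by auto
  qed
  have S_swap: "((\<lambda>(j, n). F n j) has_sum S) (UNIV \<times> UNIV)"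
    using S by (subst has_sum_swap) (simp add: case_prod_unfold)
  show ?thesis
    using iterated[OF S rows] iterated[OF S_swap cols] by simp
qed

section \<open>Residues and rectangular contours\<close>

lemma residue_deriv:
  assumes "open S" "z \<in> S" "f holomorphic_on S - {z}"
  shows "residue (deriv f) z = 0"
proof -
  obtain r where r: "0 < r" "cball z r \<subseteq> S"
    using assms(1,2) open_contains_cball by blast
  have "open (S - {z})" using assms(1) by blast
  then have hol: "deriv f holomorphic_on S - {z}"
    by (rule holomorphic_deriv[OF assms(3)])
  have sub: "path_image (circlepath z r) \<subseteq> S - {z}"
    using r by (auto simp: path_image_circlepath)
  have "(deriv f has_contour_integral 2 * pi * \<i> * residue (deriv f) z) (circlepath z r)"
    using base_residue[OF assms(1,2) r(1) hol r(2)] .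
  moreover have "(deriv f has_contour_integral 0) (circlepath z r)"
  proof (rule Cauchy_theorem_primitive)
    show "(f has_field_derivative deriv f w) (at w within S - {z})" if "w \<in> S - {z}" for w
      using holomorphic_derivI[OF assms(3) \<open>open (S - {z})\<close> that] .
  qed (use sub in auto)
  ultimately show ?thesis
    using has_contour_integral_unique by fastforce
qed

lemma residue_div_simple_zero:
  assumes "open S" "z \<in> S" "g holomorphic_on S" "E holomorphic_on S"
    and "E z = 0" "(E has_field_derivative E') (at z)" "E' \<noteq> 0"
    and "\<And>w. w \<in> S - {z} \<Longrightarrow> E w \<noteq> 0"
  shows "residue (\<lambda>w. g w / E w) z = g z / E'"
proof (rule residue_simple'[OF assms(1,2)])
  show "(\<lambda>w. g w / E w) holomorphic_on S - {z}"
    using assms(3,4,8) by (auto intro!: holomorphic_intros elim: holomorphic_on_subset)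
  have "isCont g z"
    using assms(1-3) continuous_on_eq_continuous_at holomorphic_on_imp_continuous_on by blast
  moreover have "((\<lambda>w. (E w - E z) / (w - z)) \<longlongrightarrow> E') (at z)"
    using assms(6) by (simp add: has_field_derivative_iff)
  ultimately have "((\<lambda>w. g w * inverse ((E w - E z) / (w - z))) \<longlongrightarrow> g z * inverse E') (at z)"
    using assms(7) by (intro tendsto_intros) (auto simp: isCont_def)
  also have "(\<lambda>w. g w * inverse ((E w - E z) / (w - z))) = (\<lambda>w. g w / E w * (w - z))"
    using assms(5) by (simp add: inverse_divide)
  finally show "((\<lambda>w. g w / E w * (w - z)) \<longlongrightarrow> g z / E') (at z)"
    by (simp add: divide_inverse)
qed

lemma residue_mult_deriv_div_square:
  assumes S: "open S" "z \<in> S" and hol: "g holomorphic_on S" "E holomorphic_on S"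
    and E: "E z = 0" "deriv E z \<noteq> 0" "\<And>w. w \<in> S - {z} \<Longrightarrow> E w \<noteq> 0"
  shows "residue (\<lambda>w. g w * deriv E w / E w ^ 2) z = deriv g z / deriv E z"
proof -
  have S': "open (S - {z})" using S(1) by blast
  have hol_g': "deriv g holomorphic_on S" by (rule holomorphic_deriv[OF hol(1) S(1)])
  have hol_q: "(\<lambda>w. g w / E w) holomorphic_on S - {z}"
    using hol E(3) by (auto intro!: holomorphic_intros elim: holomorphic_on_subset)
  have hol_q': "(\<lambda>w. deriv g w / E w) holomorphic_on S - {z}"
    using E(3) by (intro holomorphic_on_divide holomorphic_on_subset[OF hol_g'] holomorphic_on_subset[OF hol(2)])
      auto
  have quotient_rule: "g w * deriv E w / E w ^ 2 = deriv g w / E w - deriv (\<lambda>w. g w / E w) w"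
    if "w \<in> S - {z}" for w
  proof -
    have "(g has_field_derivative deriv g w) (at w)" "(E has_field_derivative deriv E w) (at w)"
      using that holomorphic_derivI[OF hol(1) S(1), of w UNIV] holomorphic_derivI[OF hol(2) S(1), of w UNIV]
      by auto
    then have "((\<lambda>w. g w / E w) has_field_derivative
           (deriv g w * E w - g w * deriv E w) / (E w * E w)) (at w)"
      using E(3)[OF that] by (auto intro!: derivative_eq_intros)
    then show ?thesis
      using E(3)[OF that] by (simp add: DERIV_imp_deriv field_simps power2_eq_square)
  qed
  have "residue (\<lambda>w. g w * deriv E w / E w ^ 2) z
        = residue (\<lambda>w. deriv g w / E w - deriv (\<lambda>w. g w / E w) w) z"
    using eventually_at_in_open[OF S] by (intro residue_cong) (auto elim!: eventually_mono simp: quotient_rule)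
  also have "\<dots> = residue (\<lambda>w. deriv g w / E w) z - residue (deriv (\<lambda>w. g w / E w)) z"
    using residue_diff[OF S hol_q' holomorphic_deriv[OF hol_q S']] by simp
  also have "residue (\<lambda>w. deriv g w / E w) z = deriv g z / deriv E z"
    using E by (intro residue_div_simple_zero[OF S hol_g' hol(2)] holomorphic_derivI[OF hol(2) S]) auto
  also have "residue (deriv (\<lambda>w. g w / E w)) z = 0"
    by (rule residue_deriv[OF S hol_q])
  finally show ?thesis by simp
qed

lemma contour_integral_rectpath:
  assumes "continuous_on (path_image (rectpath a1 a3)) f"
  defines "a2 \<equiv> Complex (Re a3) (Im a1)" and "a4 \<equiv> Complex (Re a1) (Im a3)"
  shows "contour_integral (rectpath a1 a3) f
         = contour_integral (linepath a1 a2) f + contour_integral (linepath a2 a3) f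
           + contour_integral (linepath a3 a4) f + contour_integral (linepath a4 a1) f"
proof -
  have rect: "rectpath a1 a3 = linepath a1 a2 +++ linepath a2 a3 +++ linepath a3 a4 +++ linepath a4 a1"
    by (simp add: rectpath_def a2_def a4_def Let_def)
  have "path_image (rectpath a1 a3)
        = closed_segment a1 a2 \<union> closed_segment a2 a3 \<union> closed_segment a3 a4 \<union> closed_segment a4 a1"
    by (simp add: rect path_image_join Un_assoc)
  then have "f contour_integrable_on linepath a1 a2" "f contour_integrable_on linepath a2 a3"
            "f contour_integrable_on linepath a3 a4" "f contour_integrable_on linepath a4 a1"
    using assms(1) by (auto intro!: contour_integrable_continuous_linepath elim: continuous_on_subset)
  then show ?thesis
    by (simp add: rect contour_integrable_joinI)
qed

section \<open>The logistic density\<close>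

definition logistic_density :: "'a::{real_normed_field,banach} \<Rightarrow> 'a" where
  "logistic_density z = exp z / (exp z + 1)^2"

definition logistic :: "real \<Rightarrow> real" where
  "logistic x = exp x / (exp x + 1)"

lemma logistic_density_of_real:
  "logistic_density (of_real x) = (of_real (logistic_density x) :: 'a::{real_normed_field,banach})"
  by (simp add: logistic_density_def exp_of_real)

lemma logistic_density_pos: "0 < logistic_density (x::real)"
  unfolding logistic_density_def by (intro divide_pos_pos zero_less_power) (auto intro: add_pos_pos)

lemma logistic_density_minus: "logistic_density (- x) = logistic_density (x::real)"
proof -
  have "exp x + 1 \<noteq> 0" using exp_gt_zero[of x] by linarith
  then show ?thesis
    by (simp add: logistic_density_def exp_minus field_simps power2_eq_square)
qed

lemma logistic_density_le_exp: "logistic_density x \<le> exp (- x :: real)"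
proof -
  have "logistic_density x = exp (- x) / (exp (- x) + 1)^2"
    using logistic_density_minus[of "- x"] by (simp add: logistic_density_def)
  also have "\<dots> \<le> exp (- x) / 1"
  proof (rule divide_left_mono)
    have "1 \<le> exp (- x) + 1" by simp
    then show "1 \<le> (exp (- x) + 1)^2" by (simp add: one_le_power)
    then show "0 < (exp (- x) + 1)^2 * 1" by linarith
  qed simp
  finally show ?thesis by simp
qed

lemma norm_logistic_density_le:
  fixes w :: complex
  assumes "Re w \<noteq> 0"
  shows "norm (logistic_density w) \<le> exp (Re w) / (exp (Re w) - 1)^2"
proof -
  have "\<bar>exp (Re w) - 1\<bar> \<le> norm (exp w + 1)"
    using norm_triangle_ineq3[of "exp w" "-1"] by (simp add: norm_exp_eq_Re)
  then have "(exp (Re w) - 1)^2 \<le> norm (exp w + 1) ^ 2"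
    by (metis abs_le_square_iff abs_norm_cancel power2_abs)
  moreover have "0 < (exp (Re w) - 1)^2"
    using assms by simp
  ultimately have "exp (Re w) / norm (exp w + 1) ^ 2 \<le> exp (Re w) / (exp (Re w) - 1)^2"
    by (intro divide_left_mono mult_pos_pos) (auto intro: less_le_trans)
  then show ?thesis
    by (simp add: logistic_density_def norm_divide norm_power norm_exp_eq_Re)
qed

lemma logistic_bounds: "0 < logistic x" "logistic x < 1"
  unfolding logistic_def by (auto simp: add_pos_pos)

lemma has_real_derivative_logistic: "(logistic has_real_derivative logistic_density x) (at x)"
proof -
  have "exp x + 1 \<noteq> 0" using exp_gt_zero[of x] by linarith
  then show ?thesis
    unfolding logistic_def logistic_density_def
    by (auto intro!: derivative_eq_intros simp: power2_eq_square algebra_simps)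
qed

section \<open>Residue calculus for the alternating logistic sum\<close>

definition csc_kernel :: "real \<Rightarrow> complex \<Rightarrow> complex" where
  "csc_kernel a w = of_real pi * logistic_density (of_real a * w) / sin (of_real pi * w)"

definition csc_kernel_poles :: "real \<Rightarrow> complex set" where
  "csc_kernel_poles a = \<int> \<union> range (\<lambda>n::int. \<i> * of_real ((2 * n + 1) * pi / a))"

definition imag_pole_residue :: "real \<Rightarrow> real" where
  "imag_pole_residue a = - (pi^2 * cosh (pi^2 / a) / (a^2 * (sinh (pi^2 / a))^2))"

lemma holomorphic_on_csc_kernel:
  assumes "a \<noteq> 0" "S \<inter> csc_kernel_poles a = {}"
  shows "csc_kernel a holomorphic_on S"
proof -
  have "sin (of_real pi * w) \<noteq> 0" "exp (of_real a * w) + 1 \<noteq> 0" if "w \<in> S" for w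
    using assms that by (auto simp: csc_kernel_poles_def sin_pi_times_eq_0_iff exp_times_plus_one_eq_0_iff)
  then show ?thesis
    unfolding csc_kernel_def logistic_density_def by (auto intro!: holomorphic_intros)
qed

lemma residue_csc_kernel_int:
  assumes a: "0 < a" "a < 2 * pi"
  shows "residue (csc_kernel a) (of_int m) = of_real (cos (pi * m) * logistic_density (a * m))"
proof -
  define S where "S = ball (of_int m :: complex) (1/2)"
  have of_real_int: "of_real c * of_int m = (of_real (c * m) :: complex)" for c
    by simp
  have cos_sq: "(cos (pi * m))^2 = 1"
    using sin_cos_squared_add[of "pi * m"] by (simp add: sin_zero_iff_int2)
  have no_zero: "exp (of_real a * w) + 1 \<noteq> 0" if "w \<in> S" for w
  proof
    assume "exp (of_real a * w) + 1 = 0"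
    then obtain n :: int where n: "w = \<i> * of_real ((2 * n + 1) * pi / a)"
      using a by (auto simp: exp_times_plus_one_eq_0_iff)
    have "1 \<le> \<bar>2 * n + 1\<bar>" by presburger
    then have "1 * (pi / a) \<le> \<bar>2 * real_of_int n + 1\<bar> * (pi / a)"
      using a by (intro mult_right_mono) (linarith, simp)
    also have "\<dots> = \<bar>Im w\<bar>"
      using a by (simp add: n abs_mult)
    also have "\<bar>Im w\<bar> = \<bar>Im (w - of_int m)\<bar>" by simp
    also have "\<dots> < 1/2"
      using that abs_Im_le_cmod[of "w - of_int m"] by (auto simp: S_def dist_norm norm_minus_commute)
    finally show False
      using a by (simp add: field_simps)
  qed
  have "residue (\<lambda>w. of_real pi * logistic_density (of_real a * w) / sin (of_real pi * w)) (of_int m)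
        = of_real pi * logistic_density (of_real a * of_int m) / (of_real pi * cos (of_real pi * of_int m))"
  proof (rule residue_simple_pole_deriv)
    show "(\<lambda>w. of_real pi * logistic_density (of_real a * w)) holomorphic_on S"
      using no_zero unfolding logistic_density_def by (auto intro!: holomorphic_intros)
    show "((\<lambda>w. sin (of_real pi * w)) has_field_derivative of_real pi * cos (of_real pi * of_int m))
          (at (of_int m))"
      by (auto intro!: derivative_eq_intros)
    show "of_real pi * logistic_density (of_real a * of_int m :: complex) \<noteq> 0"
      using logistic_density_pos[of "a * m"] unfolding of_real_int logistic_density_of_real by simp
    show "of_real pi * cos (of_real pi * of_int m :: complex) \<noteq> 0"
      using cos_sq unfolding of_real_int cos_of_real by auto
  qed (auto simp: S_def sin_pi_times_eq_0_iff intro!: holomorphic_intros convex_connected)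
  also have "\<dots> = of_real (pi * logistic_density (a * m) / (pi * cos (pi * m)))"
    unfolding of_real_int logistic_density_of_real cos_of_real by simp
  also have "pi * logistic_density (a * m) / (pi * cos (pi * m)) = cos (pi * m) * logistic_density (a * m)"
    using cos_sq by (auto simp: field_simps power2_eq_square)
  finally show ?thesis by (simp add: csc_kernel_def[abs_def])
qed

lemma residue_csc_kernel_imag:
  assumes a: "0 < a" and \<sigma>: "\<sigma> \<in> {1, -1}"
  shows "residue (csc_kernel a) (\<i> * of_real (\<sigma> * pi / a)) = of_real (imag_pole_residue a)"
proof -
  define z where "z = \<i> * of_real (\<sigma> * pi / a)"
  define S where "S = ball z (pi / a)"
  define g where "g w = of_real pi / sin (of_real pi * w)" for w :: complex
  define E where "E w = exp (of_real a * w) + 1" for w :: complex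
  have S: "open S" "z \<in> S" using a by (auto simp: S_def)
  have Im_close: "\<bar>Im w - Im z\<bar> < pi / a" if "w \<in> S" for w
    using that abs_Im_le_cmod[of "w - z"] by (auto simp: S_def dist_norm norm_minus_commute)
  have sin_nz: "sin (of_real pi * w) \<noteq> 0" if "w \<in> S" for w
  proof
    assume "sin (of_real pi * w) = 0"
    then have "Im w = 0" by (auto simp: sin_pi_times_eq_0_iff elim!: Ints_cases)
    moreover have "\<bar>Im z\<bar> = pi / a" using \<sigma> a by (auto simp: z_def)
    ultimately show False using Im_close[OF that] by simp
  qed
  have az: "of_real a * z = \<i> * of_real (\<sigma> * pi)"
    unfolding z_def using a by (simp add: field_simps)
  have E_z: "E z = 0"
    using \<sigma> unfolding E_def az by (auto simp: exp_minus)
  have E_nz: "E w \<noteq> 0" if w: "w \<in> S - {z}" for w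
  proof
    assume "E w = 0"
    have "Im (of_real a * w) - Im (of_real a * z) = a * (Im w - Im z)"
      by (simp add: algebra_simps)
    then have "\<bar>Im (of_real a * w) - Im (of_real a * z)\<bar> = a * \<bar>Im w - Im z\<bar>"
      using a by (simp add: abs_mult)
    also have "\<dots> < a * (pi / a)"
      using Im_close w a by (intro mult_strict_left_mono) auto
    also have "\<dots> < 2 * pi"
      using a by simp
    finally have close: "\<bar>Im (of_real a * w) - Im (of_real a * z)\<bar> < 2 * pi" .
    have exps: "exp (of_real a * w) = -1" "exp (of_real a * z) = -1"
      using \<open>E w = 0\<close> E_z unfolding E_def add_eq_0_iff2 by simp_all
    have "of_real a * w = of_real a * z"
      using exp_eq_minus_one_unique[OF exps close] .
    then show False
      using w a by simp
  qed
  have dE: "deriv E w = of_real a * exp (of_real a * w)" for w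
    unfolding E_def by (rule DERIV_imp_deriv) (auto intro!: derivative_eq_intros)
  have dg: "deriv g z = - (of_real pi ^ 2 * cos (of_real pi * z) / sin (of_real pi * z) ^ 2)"
    unfolding g_def using sin_nz[OF S(2)]
    by (intro DERIV_imp_deriv) (auto intro!: derivative_eq_intros simp: power2_eq_square)
  have kernel_eq: "csc_kernel a w = 1 / of_real a * (g w * deriv E w / E w ^ 2)" for w
    using a by (simp add: csc_kernel_def logistic_density_def g_def E_def dE)
  have hol_g: "g holomorphic_on S" unfolding g_def using sin_nz by (auto intro!: holomorphic_intros)
  have hol_E: "E holomorphic_on S" unfolding E_def by (auto intro!: holomorphic_intros)
  have "residue (csc_kernel a) z = 1 / of_real a * residue (\<lambda>w. g w * deriv E w / E w ^ 2) z"
    unfolding kernel_eq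
  proof (rule residue_lmul[OF S])
    show "(\<lambda>w. g w * deriv E w / E w ^ 2) holomorphic_on S - {z}"
      unfolding dE using hol_g E_nz unfolding E_def
      by (auto intro!: holomorphic_intros elim: holomorphic_on_subset)
  qed
  also have "residue (\<lambda>w. g w * deriv E w / E w ^ 2) z = deriv g z / deriv E z"
  proof (rule residue_mult_deriv_div_square[OF S hol_g hol_E E_z _ E_nz])
    show "deriv E z \<noteq> 0"
      using E_z a unfolding dE E_def add_eq_0_iff2 by simp
  qed
  also have "1 / of_real a * (deriv g z / deriv E z) = of_real (imag_pole_residue a)"
  proof -
    have pi_z: "of_real pi * z = \<i> * of_real (\<sigma> * (pi^2 / a))"
      by (simp add: z_def power2_eq_square)
    have "exp (of_real a * z) = -1"
      using E_z unfolding E_def add_eq_0_iff2 .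
    then show ?thesis
      using a \<sigma> unfolding dg dE pi_z cos_i_times_of_real sin_i_times_of_real
      by (auto simp: imag_pole_residue_def power_mult_distrib field_simps power2_eq_square)
  qed
  finally show ?thesis unfolding z_def .
qed

lemma contour_integral_csc_kernel_rectpath:
  fixes a :: real and N :: nat
  assumes a: "0 < a" "a < 2 * pi"
  defines "R \<equiv> real N + 1/2" and "h \<equiv> 2 * pi / a"
  shows "contour_integral (rectpath (Complex (-R) (-h)) (Complex R h)) (csc_kernel a)
         = 2 * pi * \<i> * of_real ((\<Sum>m = -int N..int N. cos (pi * m) * logistic_density (a * m))
                                   + 2 * imag_pole_residue a)"
proof -
  define z where "z = \<i> * of_real (pi / a)"
  define S where "S = box (Complex (-(N + 1)) (-(3 * pi / a))) (Complex (N + 1) (3 * pi / a))"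
  define ints where "ints = (of_int ` {-int N..int N} :: complex set)"
  define pts where "pts = ints \<union> {z, -z}"
  define g where "g = rectpath (Complex (-R) (-h)) (Complex R h)"
  have z_notin: "z \<notin> ints" "-z \<notin> ints" "z \<noteq> -z"
    using a by (auto simp: ints_def z_def complex_eq_iff)
  have poles: "S \<inter> csc_kernel_poles a \<subseteq> pts"
  proof
    fix w assume w: "w \<in> S \<inter> csc_kernel_poles a"
    then have Re_w: "\<bar>Re w\<bar> < N + 1" and Im_w: "\<bar>Im w\<bar> < 3 * pi / a"
      by (auto simp: S_def in_box_complex_iff)
    from w consider (int) m :: int where "w = of_int m"
      | (imag) n :: int where "w = \<i> * of_real ((2 * n + 1) * pi / a)"
      by (auto simp: csc_kernel_poles_def elim!: Ints_cases)
    then show "w \<in> pts"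
    proof cases
      case int
      then have "m \<in> {-int N..int N}" using Re_w by auto
      then show ?thesis by (auto simp: pts_def ints_def int)
    next
      case imag
      have "\<bar>2 * real_of_int n + 1\<bar> * (pi / a) < 3 * (pi / a)"
        using Im_w a by (simp add: imag abs_mult)
      then have "\<bar>2 * n + 1\<bar> < 3"
        using a by (simp only: mult_less_cancel_right_pos divide_pos_pos pi_gt_zero)
      then have "n = 0 \<or> n = -1" by presburger
      then show ?thesis using a by (auto simp: pts_def z_def imag complex_eq_iff)
    qed
  qed
  have hol: "csc_kernel a holomorphic_on S - pts"
    using poles a by (intro holomorphic_on_csc_kernel) auto
  have ordered: "Re (Complex (-R) (-h)) \<le> Re (Complex R h)" "Im (Complex (-R) (-h)) \<le> Im (Complex R h)"
    using a by (auto simp: R_def h_def)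
  have pts_inside: "pts \<subseteq> box (Complex (-R) (-h)) (Complex R h)"
    using a by (auto simp: pts_def ints_def z_def R_def h_def in_box_complex_iff field_simps)
  have cbox_inside: "cbox (Complex (-R) (-h)) (Complex R h) \<subseteq> S"
  proof -
    have "2 * pi / a < 3 * pi / a" using a by (simp add: divide_strict_right_mono)
    then show ?thesis by (auto simp: S_def R_def h_def in_box_complex_iff in_cbox_complex_iff)
  qed
  have "contour_integral g (csc_kernel a) = 2 * pi * \<i> * (\<Sum>p\<in>pts. winding_number g p * residue (csc_kernel a) p)"
  proof (rule Residue_theorem[OF _ _ _ hol])
    show "path_image g \<subseteq> S - pts"
      using path_image_rectpath_cbox_minus_box[OF ordered] cbox_inside pts_inside by (auto simp: g_def)
    show "\<forall>w. w \<notin> S \<longrightarrow> winding_number g w = 0"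
      using winding_number_rectpath_outside[OF ordered] cbox_inside by (auto simp: g_def)
  qed (auto simp: S_def pts_def ints_def g_def intro: convex_connected)
  also have "(\<Sum>p\<in>pts. winding_number g p * residue (csc_kernel a) p) = (\<Sum>p\<in>pts. residue (csc_kernel a) p)"
    using pts_inside by (intro sum.cong) (auto simp: g_def winding_number_rectpath)
  also have "\<dots> = (\<Sum>m = -int N..int N. residue (csc_kernel a) (of_int m))
                    + (residue (csc_kernel a) z + residue (csc_kernel a) (-z))"
    using z_notin by (simp add: pts_def ints_def sum.union_disjoint sum.reindex inj_on_def)
  also have "\<dots> = of_real ((\<Sum>m = -int N..int N. cos (pi * m) * logistic_density (a * m))
                             + 2 * imag_pole_residue a)"
    using residue_csc_kernel_int[OF a] residue_csc_kernel_imag[OF a(1), of 1]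
      residue_csc_kernel_imag[OF a(1), of "-1"]
    by (simp add: z_def)
  finally show ?thesis unfolding g_def .
qed

lemma path_image_rectpath_inter_csc_kernel_poles:
  fixes a :: real and N :: nat
  assumes a: "0 < a"
  defines "R \<equiv> real N + 1/2" and "h \<equiv> 2 * pi / a"
  shows "path_image (rectpath (Complex (-R) (-h)) (Complex R h)) \<inter> csc_kernel_poles a = {}"
proof -
  have R: "0 < R" and h: "0 < h" using a by (simp_all add: R_def h_def)
  have int_off: "real_of_int m \<noteq> R" "real_of_int m \<noteq> -R" for m :: int
  proof -
    have "2 * m \<noteq> 2 * int N + 1" "2 * m \<noteq> - (2 * int N + 1)" by presburger+
    then show "real_of_int m \<noteq> R" "real_of_int m \<noteq> -R"
      unfolding R_def by linarith+
  qed
  have imag_off: "(2 * real_of_int n + 1) * pi / a \<noteq> h" "(2 * real_of_int n + 1) * pi / a \<noteq> -h" for n :: int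
  proof -
    have "2 * n + 1 \<noteq> 2" "2 * n + 1 \<noteq> -2" by presburger+
    then have "2 * real_of_int n + 1 \<noteq> 2" "2 * real_of_int n + 1 \<noteq> -2" by linarith+
    moreover have "x * pi / a = y * pi / a \<longleftrightarrow> x = y" for x y
      using a by (simp add: divide_cancel_right)
    moreover have "h = 2 * pi / a" "-h = (-2) * pi / a" by (simp_all add: h_def)
    ultimately show "(2 * real_of_int n + 1) * pi / a \<noteq> h" "(2 * real_of_int n + 1) * pi / a \<noteq> -h"
      by metis+
  qed
  have "w \<notin> csc_kernel_poles a" if w: "w \<in> path_image (rectpath (Complex (-R) (-h)) (Complex R h))" for w
  proof
    have edge: "Re w = R \<or> Re w = -R \<or> Im w = h \<or> Im w = -h"
      using w R h by (subst (asm) path_image_rectpath_cbox_minus_box) (auto simp: in_box_complex_iff in_cbox_complex_iff)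
    assume "w \<in> csc_kernel_poles a"
    then consider (int) m :: int where "w = of_int m" | (imag) n :: int where "w = \<i> * of_real ((2 * n + 1) * pi / a)"
      by (auto simp: csc_kernel_poles_def elim!: Ints_cases)
    then show False
    proof cases
      case int
      then show False using edge h int_off[of m] by auto
    next
      case imag
      then show False using edge R imag_off[of n] by auto
    qed
  qed
  then show ?thesis by blast
qed

lemma norm_csc_kernel_horizontal:
  assumes a: "0 < a" and y: "\<bar>y\<bar> = 2 * pi / a"
  shows "norm (csc_kernel a (Complex x y)) \<le> pi / sinh (2 * pi^2 / a) * logistic_density (a * x)"
proof -
  have sinh_pos: "0 < sinh (2 * pi^2 / a)" using a by simp
  have "a * y = 2 * pi \<or> a * y = - (2 * pi)" using y a by (auto simp: abs_if field_simps split: if_splits)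
  then have "Complex (cos (a * y)) (sin (a * y)) = 1" by (auto simp: complex_eq_iff)
  moreover have "of_real a * Complex x y = Complex (a * x) (a * y)" by (simp add: complex_eq_iff)
  ultimately have "exp (of_real a * Complex x y) = of_real (exp (a * x))"
    by (simp add: exp_Complex)
  then have num: "logistic_density (of_real a * Complex x y) = of_real (logistic_density (a * x))"
    by (simp add: logistic_density_def exp_of_real)
  have "\<bar>sinh (pi * y)\<bar> = sinh (pi * \<bar>y\<bar>)"
    by (cases "y \<ge> 0") (auto simp: abs_if mult_less_0_iff)
  then have "sinh (2 * pi^2 / a) = \<bar>sinh (Im (of_real pi * Complex x y))\<bar>"
    using y by (simp add: power2_eq_square)
  also have "\<dots> \<le> norm (sin (of_real pi * Complex x y))"
    by (rule abs_sinh_Im_le_norm_sin)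
  finally have den: "sinh (2 * pi^2 / a) \<le> norm (sin (of_real pi * Complex x y))" .
  have "norm (csc_kernel a (Complex x y)) = pi * logistic_density (a * x) / norm (sin (of_real pi * Complex x y))"
    using logistic_density_pos[of "a * x"] by (simp add: csc_kernel_def num norm_divide norm_mult)
  also have "\<dots> \<le> pi * logistic_density (a * x) / sinh (2 * pi^2 / a)"
    using den sinh_pos logistic_density_pos[of "a * x"] by (intro divide_left_mono mult_pos_pos) auto
  finally show ?thesis by simp
qed

lemma norm_contour_integral_csc_kernel_horizontal:
  assumes a: "0 < a" and y: "\<bar>y\<bar> = 2 * pi / a" and x: "x1 \<le> x2"
    and cont: "continuous_on (closed_segment (Complex x1 y) (Complex x2 y)) (csc_kernel a)"
  shows "norm (contour_integral (linepath (Complex x1 y) (Complex x2 y)) (csc_kernel a))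
         \<le> pi / (a * sinh (2 * pi^2 / a))"
proof -
  define p where "p = Complex x1 y"
  define q where "q = Complex x2 y"
  define C where "C = pi / sinh (2 * pi^2 / a)"
  define x where "x t = x1 + t * (x2 - x1)" for t
  have C: "0 < C" using a by (simp add: C_def)
  have "(csc_kernel a has_contour_integral contour_integral (linepath p q) (csc_kernel a)) (linepath p q)"
    using contour_integrable_continuous_linepath[OF cont[folded p_def q_def]] has_contour_integral_integral
    by blast
  then have int: "((\<lambda>t. csc_kernel a (linepath p q t) * (q - p))
                    has_integral contour_integral (linepath p q) (csc_kernel a)) {0..1}"
    by (simp add: has_contour_integral_linepath)
  have "((\<lambda>t. (x2 - x1) * logistic_density (a * x t)) has_integral
          logistic (a * x 1) / a - logistic (a * x 0) / a) {0..1}"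
  proof (rule fundamental_theorem_of_calculus)
    fix t :: real
    have "((\<lambda>t. logistic (a * x t) / a) has_real_derivative (x2 - x1) * logistic_density (a * x t))
            (at t within {0..1})"
      using a unfolding x_def
      by (auto intro!: derivative_eq_intros DERIV_chain2[OF has_real_derivative_logistic] simp: field_simps)
    then show "((\<lambda>t. logistic (a * x t) / a) has_vector_derivative (x2 - x1) * logistic_density (a * x t))
                 (at t within {0..1})"
      by (simp add: has_real_derivative_iff_has_vector_derivative)
  qed simp
  then have majorant: "((\<lambda>t. C * ((x2 - x1) * logistic_density (a * x t))) has_integral
                         C * (logistic (a * x 1) / a - logistic (a * x 0) / a)) {0..1}"
    by (rule has_integral_mult_right)
  have bound: "norm (csc_kernel a (linepath p q t) * (q - p)) \<le> C * ((x2 - x1) * logistic_density (a * x t))"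
    for t
  proof -
    have "linepath p q t = Complex (x t) y"
      by (simp add: linepath_def p_def q_def x_def complex_eq_iff algebra_simps)
    moreover have "norm (q - p) = x2 - x1"
      using x by (simp add: p_def q_def cmod_def)
    moreover have "norm (csc_kernel a (Complex (x t) y)) * (x2 - x1)
                   \<le> C * logistic_density (a * x t) * (x2 - x1)"
      using norm_csc_kernel_horizontal[OF a y, of "x t"] x by (intro mult_right_mono) (simp_all add: C_def)
    ultimately show ?thesis
      by (simp add: norm_mult mult_ac)
  qed
  have "norm (contour_integral (linepath p q) (csc_kernel a))
        \<le> C * (logistic (a * x 1) / a - logistic (a * x 0) / a)"
    using integral_norm_bound_integral[OF has_integral_integrable[OF int] has_integral_integrable[OF majorant] bound]
    unfolding integral_unique[OF int] integral_unique[OF majorant] .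
  also have "\<dots> \<le> C * (1 / a)"
  proof -
    have "logistic (a * x 1) - logistic (a * x 0) \<le> 1"
      using logistic_bounds[of "a * x 1"] logistic_bounds[of "a * x 0"] by linarith
    then have "logistic (a * x 1) / a - logistic (a * x 0) / a \<le> 1 / a"
      using a by (simp add: divide_right_mono flip: diff_divide_distrib)
    then show ?thesis using C by (intro mult_left_mono) simp_all
  qed
  finally show ?thesis
    by (simp add: C_def p_def q_def mult.commute)
qed

lemma norm_csc_kernel_vertical:
  fixes N :: nat
  assumes a: "0 < a" and Re_w: "\<bar>Re w\<bar> = real N + 1/2"
  defines "u \<equiv> exp (a * (real N + 1/2))"
  shows "norm (csc_kernel a w) \<le> pi * u / (u - 1)^2"
proof -
  have "1 = \<bar>sin (Re (of_real pi * w))\<bar>"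
    using abs_sin_pi_half_odd[OF Re_w] by simp
  also have "\<dots> \<le> norm (sin (of_real pi * w))"
    by (rule abs_sin_Re_le_norm_sin)
  finally have sin_ge: "1 \<le> norm (sin (of_real pi * w))" .
  have Re_aw: "\<bar>Re (of_real a * w)\<bar> = a * (real N + 1/2)"
    using Re_w a by (simp add: abs_mult)
  then have "Re (of_real a * w) \<noteq> 0" using a by auto
  then have "norm (logistic_density (of_real a * w))
             \<le> exp (Re (of_real a * w)) / (exp (Re (of_real a * w)) - 1)^2"
    by (rule norm_logistic_density_le)
  also have "\<dots> = u / (u - 1)^2"
    using Re_aw unfolding u_def by (subst exp_div_exp_minus_one_squared_abs) simp
  finally have "norm (logistic_density (of_real a * w)) \<le> u / (u - 1)^2" .
  then have "pi * norm (logistic_density (of_real a * w)) / norm (sin (of_real pi * w)) \<le> pi * (u / (u - 1)^2) / 1"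
    using sin_ge by (intro frac_le mult_left_mono) (auto simp: u_def)
  then show ?thesis
    by (simp add: csc_kernel_def norm_divide norm_mult)
qed

lemma norm_contour_integral_csc_kernel_vertical:
  fixes N :: nat
  assumes a: "0 < a" and x: "\<bar>x\<bar> = real N + 1/2"
    and cont: "continuous_on (closed_segment (Complex x y1) (Complex x y2)) (csc_kernel a)"
  defines "u \<equiv> exp (a * (real N + 1/2))"
  shows "norm (contour_integral (linepath (Complex x y1) (Complex x y2)) (csc_kernel a))
         \<le> pi * u / (u - 1)^2 * \<bar>y2 - y1\<bar>"
proof -
  have "norm (contour_integral (linepath (Complex x y1) (Complex x y2)) (csc_kernel a))
        \<le> pi * u / (u - 1)^2 * norm (Complex x y2 - Complex x y1)"
  proof (rule has_contour_integral_bound_linepath)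
    show "(csc_kernel a has_contour_integral contour_integral (linepath (Complex x y1) (Complex x y2)) (csc_kernel a))
            (linepath (Complex x y1) (Complex x y2))"
      using contour_integrable_continuous_linepath[OF cont] has_contour_integral_integral by blast
    show "norm (csc_kernel a w) \<le> pi * u / (u - 1)^2" if "w \<in> closed_segment (Complex x y1) (Complex x y2)" for w
      using that x unfolding u_def by (intro norm_csc_kernel_vertical[OF a]) (simp add: closed_segment_same_Re)
  qed (use a in \<open>auto simp: u_def\<close>)
  then show ?thesis by (simp add: cmod_def)
qed

lemma abs_sum_residues_csc_kernel_le:
  fixes a :: real and N :: nat
  assumes a: "0 < a" "a < 2 * pi"
  defines "u \<equiv> exp (a * (real N + 1/2))"
  shows "\<bar>(\<Sum>m = -int N..int N. cos (pi * m) * logistic_density (a * m)) + 2 * imag_pole_residue a\<bar>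
         \<le> 1 / (a * sinh (2 * pi^2 / a)) + 4 * pi / a * (u / (u - 1)^2)"
proof -
  define R where "R = real N + 1/2"
  define h where "h = 2 * pi / a"
  define X where "X = (\<Sum>m = -int N..int N. cos (pi * m) * logistic_density (a * m)) + 2 * imag_pole_residue a"
  define a1 a2 a3 a4 where corners: "a1 = Complex (-R) (-h)" "a2 = Complex R (-h)" "a3 = Complex R h" "a4 = Complex (-R) h"
  have R: "0 < R" and h: "0 < h" using a by (simp_all add: R_def h_def)
  have "csc_kernel a holomorphic_on path_image (rectpath a1 a3)"
    using path_image_rectpath_inter_csc_kernel_poles[OF a(1), of N] a
    by (intro holomorphic_on_csc_kernel) (auto simp: corners R_def h_def)
  then have cont: "continuous_on (path_image (rectpath a1 a3)) (csc_kernel a)"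
    by (rule holomorphic_on_imp_continuous_on)
  have "path_image (rectpath a1 a3)
        = closed_segment a1 a2 \<union> closed_segment a2 a3 \<union> closed_segment a3 a4 \<union> closed_segment a4 a1"
    by (simp add: rectpath_def corners Let_def path_image_join Un_assoc)
  then have cont_edges: "continuous_on (closed_segment a1 a2) (csc_kernel a)"
      "continuous_on (closed_segment a2 a3) (csc_kernel a)" "continuous_on (closed_segment a4 a3) (csc_kernel a)"
      "continuous_on (closed_segment a4 a1) (csc_kernel a)"
    using cont by (auto simp: closed_segment_commute elim: continuous_on_subset)
  have bottom: "norm (contour_integral (linepath a1 a2) (csc_kernel a)) \<le> pi / (a * sinh (2 * pi^2 / a))"
    using cont_edges(1) R a(1)
    unfolding corners h_def by (intro norm_contour_integral_csc_kernel_horizontal) auto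
  have top: "norm (contour_integral (linepath a3 a4) (csc_kernel a)) \<le> pi / (a * sinh (2 * pi^2 / a))"
  proof -
    have "norm (contour_integral (linepath a4 a3) (csc_kernel a)) \<le> pi / (a * sinh (2 * pi^2 / a))"
      using cont_edges(3) R a(1)
      unfolding corners h_def by (intro norm_contour_integral_csc_kernel_horizontal) auto
    moreover have "contour_integral (linepath a3 a4) (csc_kernel a) = - contour_integral (linepath a4 a3) (csc_kernel a)"
      using contour_integral_reversepath[OF valid_path_linepath[of a4 a3]] by (simp add: reversepath_linepath)
    ultimately show ?thesis
      by simp
  qed
  have right: "norm (contour_integral (linepath a2 a3) (csc_kernel a)) \<le> pi * u / (u - 1)^2 * (2 * h)"
    using norm_contour_integral_csc_kernel_vertical[OF a(1), of R N "-h" h] cont_edges(2) h R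
    by (simp add: corners R_def u_def)
  have left: "norm (contour_integral (linepath a4 a1) (csc_kernel a)) \<le> pi * u / (u - 1)^2 * (2 * h)"
    using norm_contour_integral_csc_kernel_vertical[OF a(1), of "-R" N h "-h"] cont_edges(4) h R
    by (simp add: corners R_def u_def)
  have "contour_integral (rectpath a1 a3) (csc_kernel a) = 2 * pi * \<i> * of_real X"
    using contour_integral_csc_kernel_rectpath[OF a, of N] unfolding X_def corners R_def h_def .
  then have "2 * pi * \<bar>X\<bar> = norm (contour_integral (rectpath a1 a3) (csc_kernel a))"
    by (simp add: norm_mult)
  also have "\<dots> \<le> 2 * (pi / (a * sinh (2 * pi^2 / a))) + 2 * (pi * u / (u - 1)^2 * (2 * h))"
  proof -
    define I where "I p q = contour_integral (linepath p q) (csc_kernel a)" for p q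
    have split: "contour_integral (rectpath a1 a3) (csc_kernel a) = I a1 a2 + I a2 a3 + I a3 a4 + I a4 a1"
      using contour_integral_rectpath[OF cont] by (simp add: I_def corners)
    show ?thesis
      unfolding split
      using norm_triangle_ineq[of "I a1 a2 + I a2 a3 + I a3 a4" "I a4 a1"]
        norm_triangle_ineq[of "I a1 a2 + I a2 a3" "I a3 a4"] norm_triangle_ineq[of "I a1 a2" "I a2 a3"]
        bottom top left right
      unfolding I_def by (smt (verit))
  qed
  finally have "2 * pi * \<bar>X\<bar> \<le> 2 * pi * (1 / (a * sinh (2 * pi^2 / a)) + 4 * pi / a * (u / (u - 1)^2))"
    by (simp add: h_def field_simps)
  then show ?thesis
    unfolding X_def by simp
qed

lemma abs_alternating_logistic_series_le:
  fixes a :: real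
  assumes a: "0 < a" "a < 2 * pi"
  shows "\<bar>1/4 + 2 * (\<Sum>k. (-1) ^ Suc k * logistic_density (a * Suc k)) + 2 * imag_pole_residue a\<bar>
         \<le> 1 / (a * sinh (2 * pi^2 / a))"
proof -
  define f where "f k = (-1) ^ Suc k * logistic_density (a * Suc k)" for k
  define E where "E = 1 / (a * sinh (2 * pi^2 / a))"
  define v where "v N = exp (a * (real N + 1/2)) / (exp (a * (real N + 1/2)) - 1)^2" for N :: nat
  have "summable f"
  proof (rule summable_comparison_test)
    show "summable (\<lambda>k. exp (- a) ^ Suc k)"
      using a by (simp add: summable_geometric)
    have "norm (f k) \<le> exp (- a) ^ Suc k" for k
    proof -
      have "norm (f k) = logistic_density (a * Suc k)"
        using logistic_density_pos[of "a * Suc k"] by (simp add: f_def abs_mult)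
      also have "\<dots> \<le> exp (- (a * Suc k))"
        by (rule logistic_density_le_exp)
      also have "\<dots> = exp (- a) ^ Suc k"
        by (metis exp_of_nat_mult mult.commute mult_minus_right)
      finally show ?thesis .
    qed
    then show "\<exists>N. \<forall>k\<ge>N. norm (f k) \<le> exp (- a) ^ Suc k" by blast
  qed
  have partial: "(\<Sum>m = -int N..int N. cos (pi * m) * logistic_density (a * m)) = 1/4 + 2 * (\<Sum>k<N. f k)" for N
  proof -
    have "cos (pi * real_of_int (int k + 1)) * logistic_density (a * real_of_int (int k + 1)) = f k" for k
    proof -
      have "real_of_int (int k + 1) = real (Suc k)" by simp
      then show ?thesis
        by (simp only: mult.commute[of pi] cos_npi f_def)
    qed
    moreover have "cos (pi * real_of_int (- m)) * logistic_density (a * real_of_int (- m))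
                   = cos (pi * m) * logistic_density (a * m)" for m
      using logistic_density_minus[of "a * m"] by simp
    ultimately show ?thesis
      by (subst sum_atLeastAtMost_int_symmetric) (simp_all add: logistic_density_def)
  qed
  have "\<bar>1/4 + 2 * (\<Sum>k<N. f k) + 2 * imag_pole_residue a\<bar> \<le> E + 4 * pi / a * v N" for N
    using abs_sum_residues_csc_kernel_le[OF a, of N] unfolding partial E_def v_def .
  moreover have "(\<lambda>N. \<bar>1/4 + 2 * (\<Sum>k<N. f k) + 2 * imag_pole_residue a\<bar>)
                 \<longlonglongrightarrow> \<bar>1/4 + 2 * suminf f + 2 * imag_pole_residue a\<bar>"
    by (intro tendsto_intros summable_LIMSEQ \<open>summable f\<close>)
  moreover have "v \<longlonglongrightarrow> 0"
    unfolding v_def using a(1) by real_asymp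
  then have "(\<lambda>N. E + 4 * pi / a * v N) \<longlonglongrightarrow> E + 4 * pi / a * 0"
    by (intro tendsto_intros)
  ultimately have "\<bar>1/4 + 2 * suminf f + 2 * imag_pole_residue a\<bar> \<le> E + 4 * pi / a * 0"
    by (intro LIMSEQ_le) auto
  then show ?thesis
    unfolding f_def[abs_def] E_def by simp
qed

section \<open>The Lambert series\<close>

lemma lambert_series_alternating_eq:
  fixes x :: real
  assumes x: "\<bar>x\<bar> < 1"
  shows "(\<Sum>n. (-1) ^ Suc n * real (Suc n) * x ^ Suc n / (1 + x ^ Suc n))
         = (\<Sum>j. (-1) ^ Suc j * x ^ Suc j / (1 + x ^ Suc j)^2)"
proof -
  define F where "F n j = (-1) ^ Suc n * real (Suc n) * (-1) ^ j * x ^ (Suc n * Suc j)" for n j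
  have pow_lt: "\<bar>x\<bar> ^ Suc k < 1" "\<bar>x ^ Suc k\<bar> < 1" for k
  proof -
    show "\<bar>x\<bar> ^ Suc k < 1"
      using power_strict_mono[OF x abs_ge_zero, of "Suc k"] by simp
    then show "\<bar>x ^ Suc k\<bar> < 1"
      by (simp only: power_abs)
  qed
  have F_row: "F n j = ((-1) ^ Suc n * real (Suc n) * x ^ Suc n) * (- (x ^ Suc n)) ^ j" for n j
  proof -
    have "x ^ (Suc n * Suc j) = x ^ Suc n * (x ^ Suc n) ^ j"
      by (simp only: power_mult power_Suc[of "x ^ Suc n" j])
    then show ?thesis
      unfolding F_def power_minus[of "x ^ Suc n" j] by (simp only: mult_ac)
  qed
  have F_col: "F n j = (-1) ^ Suc j * x ^ Suc j * (of_nat (Suc n) * (- (x ^ Suc j)) ^ n)" for n j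
  proof -
    have "x ^ (Suc n * Suc j) = x ^ Suc j * (x ^ Suc j) ^ n"
      by (simp only: mult.commute[of "Suc n"] power_mult power_Suc[of "x ^ Suc j" n])
    then show ?thesis
      unfolding F_def power_minus[of "x ^ Suc j" n] by (simp add: mult_ac)
  qed
  have row_sums: "(\<lambda>j. F n j) sums ((-1) ^ Suc n * real (Suc n) * x ^ Suc n / (1 + x ^ Suc n))" for n
    using sums_mult[OF geometric_sums[of "- (x ^ Suc n)"], of "(-1) ^ Suc n * real (Suc n) * x ^ Suc n"] pow_lt(2)[of n]
    by (simp add: F_row divide_simps)
  have col_sums: "(\<lambda>n. F n j) sums ((-1) ^ Suc j * x ^ Suc j / (1 + x ^ Suc j)^2)" for j
    using sums_mult[OF geometric_deriv_sums[of "- (x ^ Suc j)"], of "(-1) ^ Suc j * x ^ Suc j"] pow_lt(2)[of j]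
    by (simp add: F_col divide_simps)
  have row_norm_sums: "(\<lambda>j. norm (F n j)) sums (real (Suc n) * \<bar>x\<bar> ^ Suc n / (1 - \<bar>x\<bar> ^ Suc n))" for n
    using sums_mult[OF geometric_sums[of "\<bar>x\<bar> ^ Suc n"], of "real (Suc n) * \<bar>x\<bar> ^ Suc n"] pow_lt(1)[of n]
    by (simp add: F_row abs_mult power_abs divide_simps)
  have "summable (\<lambda>n. real (Suc n) * \<bar>x\<bar> ^ Suc n / (1 - \<bar>x\<bar> ^ Suc n))"
  proof (rule summable_comparison_test)
    have "summable (\<lambda>n. real (Suc n) * \<bar>x\<bar> ^ n)"
      using geometric_deriv_sums[of "\<bar>x\<bar>"] x by (simp add: sums_iff)
    then show "summable (\<lambda>n. \<bar>x\<bar> / (1 - \<bar>x\<bar>) * (real (Suc n) * \<bar>x\<bar> ^ n))"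
      by (rule summable_mult)
    have "norm (real (Suc n) * \<bar>x\<bar> ^ Suc n / (1 - \<bar>x\<bar> ^ Suc n))
          \<le> \<bar>x\<bar> / (1 - \<bar>x\<bar>) * (real (Suc n) * \<bar>x\<bar> ^ n)" for n
    proof -
      have "\<bar>x\<bar> ^ Suc n \<le> \<bar>x\<bar>"
        using x by (simp add: mult_right_le_one_le power_le_one)
      then have "real (Suc n) * \<bar>x\<bar> ^ Suc n / (1 - \<bar>x\<bar> ^ Suc n)
                 \<le> real (Suc n) * \<bar>x\<bar> ^ Suc n / (1 - \<bar>x\<bar>)"
        using x by (intro divide_left_mono) auto
      moreover have "0 \<le> real (Suc n) * \<bar>x\<bar> ^ Suc n / (1 - \<bar>x\<bar> ^ Suc n)"
        using pow_lt(1)[of n] by (intro divide_nonneg_pos) auto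
      ultimately show ?thesis
        by (simp only: real_norm_def abs_of_nonneg) (simp add: field_simps)
    qed
    then show "\<exists>N. \<forall>n\<ge>N. norm (real (Suc n) * \<bar>x\<bar> ^ Suc n / (1 - \<bar>x\<bar> ^ Suc n))
                 \<le> \<bar>x\<bar> / (1 - \<bar>x\<bar>) * (real (Suc n) * \<bar>x\<bar> ^ n)"
      by blast
  qed
  then have "(\<Sum>n. \<Sum>j. F n j) = (\<Sum>j. \<Sum>n. F n j)"
    using row_norm_sums by (intro suminf_swap_norm_summable) (auto simp: sums_iff)
  then show ?thesis
    using row_sums col_sums by (simp add: sums_iff)
qed

lemma abs_Gamma_lobe_exp_le:
  fixes a :: real
  assumes a: "0 < a" "a < 2 * pi"
  shows "\<bar>Gamma_lobe (exp (- a)) + 8 * imag_pole_residue a\<bar> \<le> 4 / (a * sinh (2 * pi^2 / a))"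
proof -
  define x where "x = exp (- a)"
  define S where "S = (\<Sum>k. (-1) ^ Suc k * logistic_density (a * Suc k))"
  have x: "\<bar>x\<bar> < 1" using a by (simp add: x_def)
  have summand: "(-1) ^ Suc k * x ^ Suc k / (1 + x ^ Suc k)^2 = (-1) ^ Suc k * logistic_density (a * Suc k)" for k
  proof -
    have "x ^ Suc k = exp (- (a * Suc k))"
      unfolding x_def by (metis exp_of_nat_mult mult.commute mult_minus_right)
    then have "x ^ Suc k / (1 + x ^ Suc k)^2 = logistic_density (a * Suc k)"
      using logistic_density_minus[of "a * Suc k"] by (simp add: logistic_density_def add.commute)
    then show ?thesis by (metis times_divide_eq_right)
  qed
  have "Gamma_lobe x = 1 + 8 * (\<Sum>n. (-1) ^ Suc n * real (Suc n) * x ^ Suc n / (1 + x ^ Suc n))"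
    unfolding Gamma_lobe_def Let_def ..
  also have "\<dots> = 1 + 8 * S"
    unfolding lambert_series_alternating_eq[OF x] summand S_def ..
  finally have "Gamma_lobe x + 8 * imag_pole_residue a = 4 * (1/4 + 2 * S + 2 * imag_pole_residue a)"
    by simp
  then have "\<bar>Gamma_lobe x + 8 * imag_pole_residue a\<bar> = 4 * \<bar>1/4 + 2 * S + 2 * imag_pole_residue a\<bar>"
    by (simp only: abs_mult abs_numeral)
  also have "\<dots> \<le> 4 * (1 / (a * sinh (2 * pi^2 / a)))"
    using abs_alternating_logistic_series_le[OF a] by (simp add: S_def)
  finally show ?thesis
    by (simp add: x_def)
qed

lemma Gamma_lobe_exp_asymp_equiv:
  "(\<lambda>a. Gamma_lobe (exp (- a))) \<sim>[at_right 0] (\<lambda>a. 16 * pi^2 / a^2 * exp (- (pi^2) / a))"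
proof -
  define M where "M = (\<lambda>a::real. 16 * pi^2 / a^2 * exp (- (pi^2) / a))"
  define P where "P = (\<lambda>a. - 8 * imag_pole_residue a)"
  define E where "E = (\<lambda>a::real. 4 / (a * sinh (2 * pi^2 / a)))"
  have "\<forall>\<^sub>F a in at_right 0. norm (Gamma_lobe (exp (- a)) - P a) \<le> 1 * norm (E a)"
    by (rule eventually_at_rightI[of 0 "2 * pi"]) (use abs_Gamma_lobe_exp_le in \<open>auto simp: P_def E_def\<close>)
  then have "(\<lambda>a. Gamma_lobe (exp (- a)) - P a) \<in> O[at_right 0](E)"
    by (rule bigoI)
  also have "E \<in> o[at_right 0](M)"
    unfolding E_def M_def by real_asymp
  finally have error: "(\<lambda>a. Gamma_lobe (exp (- a)) - P a) \<in> o[at_right 0](M)" .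
  have "P \<sim>[at_right 0] M"
    unfolding P_def M_def imag_pole_residue_def by (real_asymp simp add: power2_eq_square)
  then have "(\<lambda>a. P a + (Gamma_lobe (exp (- a)) - P a)) \<sim>[at_right 0] M"
    by (subst asymp_equiv_add_right[OF error])
  then show ?thesis
    by (simp add: M_def)
qed

theorem corollary9:
  shows "(\<lambda>\<delta>::real. Gamma_lobe ((1 - sqrt \<delta>) / (1 + sqrt \<delta>)))
           \<sim>[at_right 0] (\<lambda>\<delta>. 4 * pi\<^sup>2 / \<delta> * exp (- (pi\<^sup>2) / (2 * sqrt \<delta>)))"
proof -
  define a where "a \<delta> = ln ((1 + sqrt \<delta>) / (1 - sqrt \<delta>))" for \<delta> :: real
  have "filterlim a (at_right 0) (at_right 0)"
    unfolding a_def by real_asymp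
  then have "(\<lambda>\<delta>. Gamma_lobe (exp (- a \<delta>)))
               \<sim>[at_right 0] (\<lambda>\<delta>. 16 * pi^2 / (a \<delta>)^2 * exp (- (pi^2) / a \<delta>))"
    by (rule asymp_equiv_compose'[OF Gamma_lobe_exp_asymp_equiv])
  also have "\<dots> \<sim>[at_right 0] (\<lambda>\<delta>. 4 * pi\<^sup>2 / \<delta> * exp (- (pi\<^sup>2) / (2 * sqrt \<delta>)))"
    unfolding a_def by real_asymp
  finally have equiv: "(\<lambda>\<delta>. Gamma_lobe (exp (- a \<delta>)))
                        \<sim>[at_right 0] (\<lambda>\<delta>. 4 * pi\<^sup>2 / \<delta> * exp (- (pi\<^sup>2) / (2 * sqrt \<delta>)))" .
  have nu: "\<forall>\<^sub>F \<delta> in at_right 0. exp (- a \<delta>) = (1 - sqrt \<delta>) / (1 + sqrt \<delta>)"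
  proof (rule eventually_at_rightI[of 0 1])
    fix \<delta> :: real assume "\<delta> \<in> {0<..<1}"
    then have "0 < (1 + sqrt \<delta>) / (1 - sqrt \<delta>)"
      by (intro divide_pos_pos) (simp_all add: add_pos_nonneg)
    then show "exp (- a \<delta>) = (1 - sqrt \<delta>) / (1 + sqrt \<delta>)"
      by (simp add: a_def exp_minus)
  qed simp
  show ?thesis
    by (rule asymp_equiv_transfer[OF equiv]) (use nu in \<open>auto elim!: eventually_mono\<close>)
qed

end
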